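(* Fix $\phi\in(0,1)$. For $\gamma_1,\gamma_2>0$ let $z_1(\gamma_1,\gamma_2),z_2(\gamma_1,\gamma_2)$ be the two (possibly complex) roots of $z^2-(2-\gamma_1-\gamma_2+\gamma_1\gamma_2\phi)z+(1-\gamma_1)(1-\gamma_2)=0$ and $f(\gamma_1,\gamma_2):=\max\{|z_1(\gamma_1,\gamma_2)|,|z_2(\gamma_1,\gamma_2)|\}$. Then: (1) For each fixed $\gamma_1\in(0,1]$, $\gamma_2\mapsto f(\gamma_1,\gamma_2)$ is non-increasing on $(0,1]$; for each fixed $\gamma_2\in(0,1]$, $\gamma_1\mapsto f(\gamma_1,\gamma_2)$ is non-increasing on $(0,1]$. Hence $\min_{(\gamma_1,\gamma_2)\in(0,1]^2}f(\gamma_1,\gamma_2)=f(1,1)$. (2) For each fixed $\gamma_2\in[1,\infty)$, $\gamma_1\mapsto f(\gamma_1,\gamma_2)$ is non-increasing on $(0,1]$; for each fixed $\gamma_1\in[1,\infty)$, $\gamma_2\mapsto f(\gamma_1,\gamma_2)$ is non-increasing on $(0,1]$. Hence $\min_{(\gamma_1,\gamma_2)\in(0,1]\times[1,\infty)}f=\min_{\gamma_2\ge1}f(1,\gamma_2)$ and $\min_{(\gamma_1,\gamma_2)\in[1,\infty)\times(0,1]}f=\min_{\gamma_1\ge1}f(\gamma_1,1)$. *)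

theory Defs
  imports Complex_Main
begin

definition rootmax :: "real \<Rightarrow> real \<Rightarrow> real \<Rightarrow> real" where
  "rootmax \<phi> g1 g2 = Max (cmod ` {z::complex.
      z^2 - complex_of_real (2 - g1 - g2 + g1 * g2 * \<phi>) * z
        + complex_of_real ((1 - g1) * (1 - g2)) = 0})"

end

theory Submission
  imports Defs
begin

text \<open>Write \<open>p\<^sub>t\<close> for the characteristic polynomial with \<open>\<gamma>\<^sub>2 = t\<close> and \<open>\<gamma>\<^sub>1 = g\<close> fixed.
  Then \<open>p\<^sub>a - p\<^sub>b = (a - b) L\<close> with \<open>L z = (1 - g\<phi>) z + (g - 1)\<close> affine, so for \<open>a \<le> b\<close>
  the polynomial \<open>p\<^sub>a\<close> is non-positive at every real root of \<open>p\<^sub>b\<close> where \<open>L \<ge> 0\<close>; a monic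
  real quadratic that is non-positive at \<open>x\<close> has a real root of modulus at least \<open>\<bar>x\<bar>\<close>.
  For \<open>g \<le> 1\<close> the dominant root of \<open>p\<^sub>b\<close> is its larger root, which lies to the right of
  the zero of \<open>L\<close> because \<open>p\<^sub>b\<close> is non-positive there; for \<open>g \<ge> 1\<close> sign changes of \<open>p\<^sub>b\<close>
  confine both roots to \<open>[1 - g, 1]\<close>, where \<open>L \<ge> 0\<close>. When \<open>p\<^sub>b\<close> has non-real roots its
  spectral radius is the square root of its constant term, which decreases in \<open>b\<close>.
  The remaining claims follow from the symmetry in \<open>\<gamma>\<^sub>1, \<gamma>\<^sub>2\<close>.\<close>

lemma complex_quadratic_roots:
  fixes B C :: complex
  shows "{z. z\<^sup>2 - B * z + C = 0} = {(B + csqrt (B\<^sup>2 - 4 * C)) / 2, (B - csqrt (B\<^sup>2 - 4 * C)) / 2}"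
proof -
  define s where "s = csqrt (B\<^sup>2 - 4 * C)"
  have s2: "s\<^sup>2 = B\<^sup>2 - 4 * C"
    by (simp add: s_def)
  have "4 * (z\<^sup>2 - B * z + C) = (2 * z - B)\<^sup>2 - s\<^sup>2" for z
    unfolding s2 by (simp add: power2_eq_square algebra_simps)
  then have "z\<^sup>2 - B * z + C = 0 \<longleftrightarrow> (2 * z - B)\<^sup>2 = s\<^sup>2" for z
    by (metis eq_iff_diff_eq_0 mult_eq_0_iff zero_neq_numeral)
  then have roots: "z\<^sup>2 - B * z + C = 0 \<longleftrightarrow> 2 * z - B = s \<or> 2 * z - B = - s" for z
    by (simp add: power2_eq_iff)
  have "2 * z - B = s \<longleftrightarrow> z = (B + s) / 2" "2 * z - B = - s \<longleftrightarrow> z = (B - s) / 2" for z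
    by (auto simp: field_simps)
  with roots show ?thesis
    unfolding s_def by blast
qed

definition root_radius :: "real \<Rightarrow> real \<Rightarrow> real" where
  "root_radius B C = (if 0 \<le> B\<^sup>2 - 4 * C then (\<bar>B\<bar> + sqrt (B\<^sup>2 - 4 * C)) / 2 else sqrt C)"

lemma Max_cmod_roots_eq_root_radius:
  fixes B C :: real
  shows "Max (cmod ` {z. z\<^sup>2 - of_real B * z + of_real C = 0}) = root_radius B C"
proof -
  define D where "D = B\<^sup>2 - 4 * C"
  have "(complex_of_real B)\<^sup>2 - 4 * of_real C = of_real D"
    by (simp add: D_def)
  then have "Max (cmod ` {z. z\<^sup>2 - of_real B * z + of_real C = 0})
      = max (cmod (of_real B + csqrt (of_real D))) (cmod (of_real B - csqrt (of_real D))) / 2"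
    by (simp add: complex_quadratic_roots norm_divide)
  also have "\<dots> = root_radius B C"
  proof (cases "0 \<le> D")
    case True
    have "max \<bar>B + d\<bar> \<bar>B - d\<bar> = \<bar>B\<bar> + d" if "0 \<le> d" for d
      using that by (auto simp: max_def abs_if)
    with True show ?thesis
      by (simp add: root_radius_def D_def[symmetric] csqrt_of_real flip: of_real_add of_real_diff)
  next
    case False
    have "sqrt (B\<^sup>2 + (sqrt (- D))\<^sup>2) = 2 * sqrt C"
      using False by (simp add: D_def real_sqrt_mult)
    then have "cmod (of_real B + of_real (sqrt (- D)) * \<i>) = 2 * sqrt C"
      "cmod (of_real B - of_real (sqrt (- D)) * \<i>) = 2 * sqrt C"
      by (simp_all add: cmod_def)
    with False show ?thesis
      by (simp add: root_radius_def D_def[symmetric] csqrt_of_real')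
  qed
  finally show ?thesis .
qed

lemma real_quadratic_nonpos:
  fixes B C x :: real
  assumes "x\<^sup>2 - B * x + C \<le> 0"
  shows "0 \<le> B\<^sup>2 - 4 * C" and "\<bar>2 * x - B\<bar> \<le> sqrt (B\<^sup>2 - 4 * C)"
proof -
  have sq: "(2 * x - B)\<^sup>2 = 4 * (x\<^sup>2 - B * x + C) + (B\<^sup>2 - 4 * C)"
    by (simp add: power2_eq_square algebra_simps)
  have le: "(2 * x - B)\<^sup>2 \<le> B\<^sup>2 - 4 * C"
    unfolding sq using assms by simp
  then show "0 \<le> B\<^sup>2 - 4 * C"
    by (meson order_trans zero_le_power2)
  show "\<bar>2 * x - B\<bar> \<le> sqrt (B\<^sup>2 - 4 * C)"
    using real_sqrt_le_mono[OF le] by simp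
qed

lemma abs_le_root_radius:
  fixes B C x :: real
  assumes "x\<^sup>2 - B * x + C \<le> 0"
  shows "\<bar>x\<bar> \<le> root_radius B C"
proof -
  have "2 * root_radius B C = \<bar>B\<bar> + sqrt (B\<^sup>2 - 4 * C)"
    using real_quadratic_nonpos(1)[OF assms] by (simp add: root_radius_def)
  then show ?thesis
    using real_quadratic_nonpos(2)[OF assms] by arith
qed

lemma le_larger_root:
  fixes B C x :: real
  assumes "x\<^sup>2 - B * x + C \<le> 0"
  shows "2 * x \<le> B + sqrt (B\<^sup>2 - 4 * C)"
  using abs_le_D1[OF real_quadratic_nonpos(2)[OF assms]] by linarith

lemma sqrt_le_root_radius:
  fixes B C :: real
  assumes "0 \<le> C"
  shows "sqrt C \<le> root_radius B C"
proof (cases "0 \<le> B\<^sup>2 - 4 * C")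
  case True
  have "2 * sqrt C = sqrt (4 * C)"
    by (simp add: real_sqrt_mult)
  also have "\<dots> \<le> \<bar>B\<bar>"
    using True real_sqrt_le_mono[of "4 * C" "B\<^sup>2"] by simp
  moreover have "2 * root_radius B C = \<bar>B\<bar> + sqrt (B\<^sup>2 - 4 * C)"
    using True by (simp add: root_radius_def)
  ultimately show ?thesis
    using real_sqrt_ge_zero[OF True] by linarith
next
  case False
  then show ?thesis
    by (simp add: root_radius_def)
qed

lemma root_radius_nonneg: "0 \<le> root_radius B C"
proof (cases "0 \<le> B\<^sup>2 - 4 * C")
  case False
  then have "0 \<le> C"
    using zero_le_power2[of B] by linarith
  with False show ?thesis
    by (simp add: root_radius_def)
qed (simp add: root_radius_def)

lemma real_quadratic_roots:
  fixes B C :: real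
  assumes "0 \<le> B\<^sup>2 - 4 * C"
  defines "r \<equiv> sqrt (B\<^sup>2 - 4 * C)"
  shows "((B + r) / 2)\<^sup>2 - B * ((B + r) / 2) + C = 0"
    and "((B - r) / 2)\<^sup>2 - B * ((B - r) / 2) + C = 0"
proof -
  have r2: "r\<^sup>2 = B\<^sup>2 - 4 * C"
    using assms by simp
  have "((B + r) / 2)\<^sup>2 - B * ((B + r) / 2) + C = (r\<^sup>2 - (B\<^sup>2 - 4 * C)) / 4"
    "((B - r) / 2)\<^sup>2 - B * ((B - r) / 2) + C = (r\<^sup>2 - (B\<^sup>2 - 4 * C)) / 4"
    by (simp_all add: power2_eq_square field_simps)
  then show "((B + r) / 2)\<^sup>2 - B * ((B + r) / 2) + C = 0"
    and "((B - r) / 2)\<^sup>2 - B * ((B - r) / 2) + C = 0"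
    by (simp_all add: r2)
qed

lemma root_radius_le_if_roots_nonpos:
  fixes B C B' C' :: real
  assumes "0 \<le> B\<^sup>2 - 4 * C"
    and "\<And>x. x\<^sup>2 - B * x + C = 0 \<Longrightarrow> x\<^sup>2 - B' * x + C' \<le> 0"
  shows "root_radius B C \<le> root_radius B' C'"
proof -
  define r where "r = sqrt (B\<^sup>2 - 4 * C)"
  have "\<bar>(B + r) / 2\<bar> \<le> root_radius B' C'" "\<bar>(B - r) / 2\<bar> \<le> root_radius B' C'"
    unfolding r_def
    by (intro abs_le_root_radius assms(2) real_quadratic_roots[OF assms(1)])+
  then have "\<bar>B + r\<bar> \<le> 2 * root_radius B' C'" "\<bar>B - r\<bar> \<le> 2 * root_radius B' C'"
    by simp_all
  moreover have "2 * root_radius B C = \<bar>B\<bar> + r"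
    using assms(1) by (simp add: root_radius_def r_def)
  ultimately show ?thesis
    by arith
qed

lemma monic_quadratic_factor:
  fixes B C x z :: "'a::comm_ring_1"
  assumes "x\<^sup>2 - B * x + C = 0"
  shows "z\<^sup>2 - B * z + C = (z - x) * (z - (B - x))"
proof -
  have "C = B * x - x\<^sup>2"
    using assms by (simp add: algebra_simps)
  then show ?thesis
    by (simp add: power2_eq_square algebra_simps)
qed

lemma affine_nonneg_between:
  fixes c d l u z :: "'a::linordered_ring"
  assumes "l \<le> z" "z \<le> u" "0 \<le> c * l + d" "0 \<le> c * u + d"
  shows "0 \<le> c * z + d"
proof (cases "0 \<le> c")
  case True
  with assms(1) have "c * l \<le> c * z"
    by (rule mult_left_mono)
  with assms(3) show ?thesis
    by (meson add_right_mono order_trans)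
next
  case False
  then have "c * u \<le> c * z"
    using assms(2) by (simp add: mult_left_mono_neg)
  with assms(4) show ?thesis
    by (meson add_right_mono order_trans)
qed

lemma cINF_eq_cINF_mutual:
  fixes f :: "'a \<Rightarrow> 'c::conditionally_complete_lattice" and g :: "'b \<Rightarrow> 'c"
  assumes "S \<noteq> {}" "T \<noteq> {}" "bdd_below (f ` S)" "bdd_below (g ` T)"
    and "\<And>y. y \<in> T \<Longrightarrow> \<exists>x\<in>S. f x \<le> g y"
    and "\<And>x. x \<in> S \<Longrightarrow> \<exists>y\<in>T. g y \<le> f x"
  shows "(INF x\<in>S. f x) = (INF y\<in>T. g y)"
  using assms by (intro antisym cINF_mono)

definition char_poly :: "real \<Rightarrow> real \<Rightarrow> real \<Rightarrow> real \<Rightarrow> real" where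
  "char_poly \<phi> g1 g2 z = z\<^sup>2 - (2 - g1 - g2 + g1 * g2 * \<phi>) * z + (1 - g1) * (1 - g2)"

lemma char_poly_factor:
  "char_poly \<phi> g1 g2 z = (z - (1 - g1)) * (z - (1 - g2)) - g1 * g2 * \<phi> * z"
  by (simp add: char_poly_def power2_eq_square algebra_simps)

lemma char_poly_diff:
  "char_poly \<phi> g a z = char_poly \<phi> g b z + (a - b) * ((1 - g * \<phi>) * z + (g - 1))"
  by (simp add: char_poly_def algebra_simps)

lemma rootmax_eq_root_radius:
  "rootmax \<phi> g1 g2 = root_radius (2 - g1 - g2 + g1 * g2 * \<phi>) ((1 - g1) * (1 - g2))"
  unfolding rootmax_def by (rule Max_cmod_roots_eq_root_radius)

lemma rootmax_commute: "rootmax \<phi> g1 g2 = rootmax \<phi> g2 g1"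
  by (simp add: rootmax_eq_root_radius algebra_simps)

lemma rootmax_nonneg: "0 \<le> rootmax \<phi> g1 g2"
  by (simp add: rootmax_eq_root_radius root_radius_nonneg)

lemma rootmax_antimono_le_one:
  fixes \<phi> g a b :: real
  assumes "0 \<le> \<phi>" "\<phi> < 1" "0 \<le> g" "g \<le> 1" "a \<le> b" "0 \<le> b" "b \<le> 1"
  shows "rootmax \<phi> g b \<le> rootmax \<phi> g a"
proof -
  define Ba Bb Ca Cb where "Ba = 2 - g - a + g * a * \<phi>" and "Bb = 2 - g - b + g * b * \<phi>"
    and "Ca = (1 - g) * (1 - a)" and "Cb = (1 - g) * (1 - b)"
  have char_poly_a: "char_poly \<phi> g a z = z\<^sup>2 - Ba * z + Ca" for z
    by (simp add: char_poly_def Ba_def Ca_def)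
  have char_poly_b: "char_poly \<phi> g b z = z\<^sup>2 - Bb * z + Cb" for z
    by (simp add: char_poly_def Bb_def Cb_def)
  have "Cb \<le> Ca" "0 \<le> Ca"
    using assms by (simp_all add: Ca_def Cb_def mult_left_mono)
  have "rootmax \<phi> g b = root_radius Bb Cb" "rootmax \<phi> g a = root_radius Ba Ca"
    by (simp_all add: rootmax_eq_root_radius Ba_def Bb_def Ca_def Cb_def)
  moreover have "root_radius Bb Cb \<le> root_radius Ba Ca"
  proof (cases "0 \<le> Bb\<^sup>2 - 4 * Cb")
    case False
    then have "root_radius Bb Cb = sqrt Cb"
      by (simp add: root_radius_def)
    also have "\<dots> \<le> sqrt Ca"
      using \<open>Cb \<le> Ca\<close> by simp
    also have "\<dots> \<le> root_radius Ba Ca"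
      using \<open>0 \<le> Ca\<close> by (rule sqrt_le_root_radius)
    finally show ?thesis .
  next
    case True
    define x where "x = (Bb + sqrt (Bb\<^sup>2 - 4 * Cb)) / 2"
    have "0 \<le> Bb"
      using assms by (simp add: Bb_def)
    with True have radius_b: "root_radius Bb Cb = x"
      by (simp add: root_radius_def x_def)
    have "char_poly \<phi> g b x = 0"
      using real_quadratic_roots(1)[OF True] by (simp add: char_poly_b x_def)
    define k where "k = 1 - g * \<phi>"
    have "g * \<phi> \<le> g" "g * \<phi> \<le> \<phi>"
      using assms by (simp_all add: mult_left_le mult_left_le_one_le)
    then have "0 < k"
      using assms by (simp add: k_def)
    define z0 where "z0 = (1 - g) / k"
    have "0 \<le> z0" "z0 \<le> 1"
      using \<open>0 < k\<close> \<open>g * \<phi> \<le> g\<close> assms by (simp_all add: z0_def k_def)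
    have "z0 - (1 - g) = g * \<phi> * z0"
      using \<open>0 < k\<close> by (simp add: z0_def k_def field_simps)
    then have "char_poly \<phi> g b z0 = g * \<phi> * z0 * (z0 - 1)"
      by (simp add: char_poly_factor algebra_simps)
    also have "\<dots> \<le> 0"
      using assms \<open>0 \<le> z0\<close> \<open>z0 \<le> 1\<close> by (simp add: mult_nonneg_nonpos)
    finally have "z0 \<le> x"
      using le_larger_root[of z0 Bb Cb] by (simp add: char_poly_b x_def)
    have "char_poly \<phi> g a x = (a - b) * k * (x - z0)"
      using \<open>char_poly \<phi> g b x = 0\<close> \<open>0 < k\<close>
      by (simp add: char_poly_diff[of \<phi> g a x b] z0_def k_def field_simps)
    also have "\<dots> \<le> 0"
      using assms \<open>0 < k\<close> \<open>z0 \<le> x\<close> by (simp add: mult_nonpos_nonneg)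
    finally have "\<bar>x\<bar> \<le> root_radius Ba Ca"
      by (intro abs_le_root_radius) (simp add: char_poly_a)
    with radius_b show ?thesis
      by simp
  qed
  ultimately show ?thesis
    by simp
qed

lemma rootmax_antimono_ge_one:
  fixes \<phi> s a b :: real
  assumes "0 \<le> \<phi>" "\<phi> \<le> 1" "1 \<le> s" "a \<le> b" "0 \<le> b" "b \<le> 1"
  shows "rootmax \<phi> s b \<le> rootmax \<phi> s a"
proof -
  define Ba Bb Ca Cb where "Ba = 2 - s - a + s * a * \<phi>" and "Bb = 2 - s - b + s * b * \<phi>"
    and "Ca = (1 - s) * (1 - a)" and "Cb = (1 - s) * (1 - b)"
  have char_poly_a: "char_poly \<phi> s a z = z\<^sup>2 - Ba * z + Ca" for z
    by (simp add: char_poly_def Ba_def Ca_def)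
  have char_poly_b: "char_poly \<phi> s b z = z\<^sup>2 - Bb * z + Cb" for z
    by (simp add: char_poly_def Bb_def Cb_def)
  have "Cb \<le> 0"
    using assms by (simp add: Cb_def mult_nonpos_nonneg)
  then have "0 \<le> Bb\<^sup>2 - 4 * Cb"
    using zero_le_power2[of Bb] by linarith
  have roots_in_interval: "1 - s \<le> x \<and> x \<le> 1" if root: "char_poly \<phi> s b x = 0" for x
  proof
    show "1 - s \<le> x"
    proof (rule ccontr)
      assume "\<not> 1 - s \<le> x"
      then have "0 < (x - (1 - s)) * (x - (1 - b))" "s * b * \<phi> * x \<le> 0"
        using assms by (simp_all add: mult_neg_neg mult_nonneg_nonpos)
      with root show False
        by (simp add: char_poly_factor)
    qed
    show "x \<le> 1"
    proof (rule ccontr)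
      assume "\<not> x \<le> 1"
      have factor: "char_poly \<phi> s b z = (z - x) * (z - (Bb - x))" for z
        using root unfolding char_poly_b by (rule monic_quadratic_factor)
      have "x * (Bb - x) = Cb"
        using factor[of 0] by (simp add: char_poly_b algebra_simps)
      with \<open>Cb \<le> 0\<close> \<open>\<not> x \<le> 1\<close> have "Bb - x \<le> 0"
        using mult_pos_pos[of x "Bb - x"] by linarith
      with \<open>\<not> x \<le> 1\<close> have "char_poly \<phi> s b 1 < 0"
        by (simp add: factor mult_neg_pos)
      moreover have "char_poly \<phi> s b 1 = s * b * (1 - \<phi>)"
        by (simp add: char_poly_factor algebra_simps)
      moreover have "0 \<le> s * b * (1 - \<phi>)"
        using assms by simp
      ultimately show False
        by simp
    qed
  qed
  have "rootmax \<phi> s b = root_radius Bb Cb" "rootmax \<phi> s a = root_radius Ba Ca"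
    by (simp_all add: rootmax_eq_root_radius Ba_def Bb_def Ca_def Cb_def)
  moreover have "root_radius Bb Cb \<le> root_radius Ba Ca"
  proof (rule root_radius_le_if_roots_nonpos[OF \<open>0 \<le> Bb\<^sup>2 - 4 * Cb\<close>])
    fix x
    assume "x\<^sup>2 - Bb * x + Cb = 0"
    then have root: "char_poly \<phi> s b x = 0"
      by (simp add: char_poly_b)
    have "0 \<le> (1 - s * \<phi>) * x + (s - 1)"
    proof (rule affine_nonneg_between)
      show "1 - s \<le> x" "x \<le> 1"
        using roots_in_interval[OF root] by simp_all
      have "(1 - s * \<phi>) * (1 - s) + (s - 1) = (s - 1) * (s * \<phi>)"
        by (simp add: algebra_simps)
      then show "0 \<le> (1 - s * \<phi>) * (1 - s) + (s - 1)"
        using assms by simp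
      show "0 \<le> (1 - s * \<phi>) * 1 + (s - 1)"
        using assms mult_left_le[of \<phi> s] by simp
    qed
    then have "char_poly \<phi> s a x \<le> 0"
      using root assms by (simp add: char_poly_diff[of \<phi> s a x b] mult_nonpos_nonneg)
    then show "x\<^sup>2 - Ba * x + Ca \<le> 0"
      by (simp add: char_poly_a)
  qed
  ultimately show ?thesis
    by simp
qed

lemma rootmax_ge_rootmax_one_one:
  fixes \<phi> g1 g2 :: real
  assumes "0 \<le> \<phi>" "\<phi> < 1" "0 \<le> g1" "g1 \<le> 1" "0 \<le> g2" "g2 \<le> 1"
  shows "rootmax \<phi> 1 1 \<le> rootmax \<phi> g1 g2"
proof -
  have "rootmax \<phi> 1 1 \<le> rootmax \<phi> 1 g1"
    using assms by (intro rootmax_antimono_le_one) auto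
  also have "\<dots> = rootmax \<phi> g1 1"
    by (rule rootmax_commute)
  also have "\<dots> \<le> rootmax \<phi> g1 g2"
    using assms by (intro rootmax_antimono_le_one) auto
  finally show ?thesis .
qed

lemma INF_rootmax_eq_INF_first_one:
  fixes \<phi> :: real
  assumes "0 \<le> \<phi>" "\<phi> \<le> 1"
  shows "(INF p\<in>{0<..1} \<times> {1..}. rootmax \<phi> (fst p) (snd p)) = (INF y\<in>{1..}. rootmax \<phi> 1 y)"
proof (rule cINF_eq_cINF_mutual)
  show "\<exists>p\<in>{0<..1} \<times> {1..}. rootmax \<phi> (fst p) (snd p) \<le> rootmax \<phi> 1 y" if "y \<in> {1..}" for y
    using that by (intro bexI[of _ "(1, y)"]) auto
  show "\<exists>y\<in>{1..}. rootmax \<phi> 1 y \<le> rootmax \<phi> (fst p) (snd p)" if "p \<in> {0<..1} \<times> {1..}" for p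
    using that assms rootmax_antimono_ge_one[of \<phi> "snd p" "fst p" 1] rootmax_commute
    by (intro bexI[of _ "snd p"]) auto
qed (auto intro: bdd_belowI2 rootmax_nonneg)

lemma INF_rootmax_eq_INF_second_one:
  fixes \<phi> :: real
  assumes "0 \<le> \<phi>" "\<phi> \<le> 1"
  shows "(INF p\<in>{1..} \<times> {0<..1}. rootmax \<phi> (fst p) (snd p)) = (INF x\<in>{1..}. rootmax \<phi> x 1)"
proof (rule cINF_eq_cINF_mutual)
  show "\<exists>p\<in>{1..} \<times> {0<..1}. rootmax \<phi> (fst p) (snd p) \<le> rootmax \<phi> x 1" if "x \<in> {1..}" for x
    using that by (intro bexI[of _ "(x, 1)"]) auto
  show "\<exists>x\<in>{1..}. rootmax \<phi> x 1 \<le> rootmax \<phi> (fst p) (snd p)" if "p \<in> {1..} \<times> {0<..1}" for p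
    using that assms rootmax_antimono_ge_one[of \<phi> "fst p" "snd p" 1]
    by (intro bexI[of _ "fst p"]) auto
qed (auto intro: bdd_belowI2 rootmax_nonneg)

theorem mainTheorem12:
  fixes \<phi> :: real
  assumes "0 < \<phi>" and "\<phi> < 1"
  defines "f \<equiv> rootmax \<phi>"
  shows
    "(\<forall>g1\<in>{0<..1}. \<forall>a b. 0 < a \<and> a \<le> b \<and> b \<le> 1 \<longrightarrow> f g1 b \<le> f g1 a)
   \<and> (\<forall>g2\<in>{0<..1}. \<forall>a b. 0 < a \<and> a \<le> b \<and> b \<le> 1 \<longrightarrow> f b g2 \<le> f a g2)
   \<and> (\<forall>g1\<in>{0<..1}. \<forall>g2\<in>{0<..1}. f 1 1 \<le> f g1 g2)
   \<and> (\<forall>g2\<in>{1..}. \<forall>a b. 0 < a \<and> a \<le> b \<and> b \<le> 1 \<longrightarrow> f b g2 \<le> f a g2)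
   \<and> (\<forall>g1\<in>{1..}. \<forall>a b. 0 < a \<and> a \<le> b \<and> b \<le> 1 \<longrightarrow> f g1 b \<le> f g1 a)
   \<and> (INF p\<in>{0<..1} \<times> {1..}. f (fst p) (snd p)) = (INF g2\<in>{1..}. f 1 g2)
   \<and> (INF p\<in>{1..} \<times> {0<..1}. f (fst p) (snd p)) = (INF g1\<in>{1..}. f g1 1)"
proof -
  have "0 \<le> \<phi>" "\<phi> \<le> 1"
    using assms by simp_all
  have small: "f g b \<le> f g a" if "0 < g" "g \<le> 1" "0 < a" "a \<le> b" "b \<le> 1" for g a b
    unfolding f_def using assms that by (intro rootmax_antimono_le_one) auto
  have large: "f g b \<le> f g a" if "1 \<le> g" "0 < a" "a \<le> b" "b \<le> 1" for g a b
    unfolding f_def using assms that by (intro rootmax_antimono_ge_one) auto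
  have swap: "f x y = f y x" for x y
    unfolding f_def by (rule rootmax_commute)
  show ?thesis
    using small large swap \<open>0 \<le> \<phi>\<close> \<open>\<phi> < 1\<close> \<open>\<phi> \<le> 1\<close>
    by (auto simp: f_def rootmax_ge_rootmax_one_one INF_rootmax_eq_INF_first_one INF_rootmax_eq_INF_second_one)
qed

end
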